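(* Let $\varepsilon_1,\varepsilon_2,\ldots$ be independent random variables uniformly distributed on $[0,1]$ (hypothesis $H_0^{U[0,1]}$), and let the integers $m\ge2$ and $r_{bits}\ge1$ be fixed (independent of $n$). Then there exists a quadratic statistic $T_{quad}$ (whose parameters do not depend on $n$), built from summing statistics of the sequence $\varepsilon_1,\ldots,\varepsilon_n$ with $\mathfrak{X}=[0,1]$ and $\mathbf{P}_0$ the uniform distribution on $[0,1]$, such that $T_{SO}-T_{quad}\xrightarrow{\mathbf{P}}0$ as $n\to\infty$.
   Context: $g_{bits}:[0,1]\to\{0,1\}^{r_{bits}}$ is a fixed function assigning to each number in $[0,1]$ a fixed selection of $r_{bits}$ bits of its binary expansion (so that for $\varepsilon$ uniform on $[0,1]$, $g_{bits}(\varepsilon)$ is uniform on $\{0,1\}^{r_{bits}}$). Put $R=2^{r_{bits}}$, $\varkappa_i=g_{bits}(\varepsilon_i)$, and let $k_0,\ldots,k_{R-1}$ be the elements of $\{0,1\}^{r_{bits}}$. Let $\tilde\varkappa_i=\varkappa_i$ for $i\le n$ and $\tilde\varkappa_i=\varkappa_{i-n}$ for $i>n$. For $d\in\{m-1,m\}$ and $(i_1,\ldots,i_d)\in\{k_0,\ldots,k_{R-1}\}^d$, $\nu_{i_1,\ldots,i_d}=\sum_{i=1}^nI\{(\tilde\varkappa_i,\ldots,\tilde\varkappa_{i+d-1})=(i_1,\ldots,i_d)\}$ (cyclic counts). $T_{SO}=\frac{R^m}{n}\sum_{i_1,\ldots,i_m}(\nu_{i_1,\ldots,i_m}-\frac{n}{R^m})^2-\frac{R^{m-1}}{n}\sum_{i_1,\ldots,i_{m-1}}(\nu_{i_1,\ldots,i_{m-1}}-\frac{n}{R^{m-1}})^2$,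 sums over $\{k_0,\ldots,k_{R-1}\}^m$ resp. $^{m-1}$. Summing statistic (here with $\mathfrak{X}=[0,1]$, $\mathbf{E}_{H_0},\mathbf{D}_{H_0},\mathrm{cov}_{H_0}$ under i.i.d. uniform $\varepsilon_i$): for a natural number $m_{sum}$ and measurable $f_{sum}:[0,1]^{m_{sum}}\to\mathbb{R}$, let $E_{sum}=\mathbf{E}_{H_0}f_{sum}(\varepsilon_1,\ldots,\varepsilon_{m_{sum}})$, $\sigma^2_{sum}=\mathbf{D}_{H_0}f_{sum}(\varepsilon_1,\ldots,\varepsilon_{m_{sum}})+2\sum_{i=2}^{m_{sum}}\mathrm{cov}_{H_0}(f_{sum}(\varepsilon_i,\ldots,\varepsilon_{i+m_{sum}-1}),f_{sum}(\varepsilon_1,\ldots,\varepsilon_{m_{sum}}))$, $\sigma_{sum}\ge0$; if $\sigma_{sum}\in(0,\infty)$, the summing statistic is $T_{sum}=\frac{\sum_{i=1}^{n-m_{sum}+1}(f_{sum}(\varepsilon_i,\ldots,\varepsilon_{i+m_{sum}-1})-E_{sum})}{\sigma_{sum}\sqrt{n-m_{sum}+1}}$. A quadratic statistic is $T_{quad}=\sum_{i=1}^{\tau}\big(\sum_{q=1}^{Q}d(i,q)T^{[q]}_{sum}\big)^2$ for some natural $\tau,Q$, reals $d(i,q)$, and summing statistics $T^{[1]}_{sum},\ldots,T^{[Q]}_{sum}$ (with fixed $m^{[q]}_{sum}$, $f^{[q]}_{sum}$); equivalently a nonnegative definite quadratic form of summing statistics with coefficients independent of $n$. *)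

theory Defs
  imports "HOL-Probability.Probability"
begin

text \<open>Code of the selected bits: bit number p j (j < r, p j \<ge> 1) of the binary
  expansion of x, encoded as the natural number sum_j bit_j * 2^j in {0..<2^r}.
  This is a bijective encoding of the element of {0,1}^r.\<close>
definition bit_sel :: "(nat \<Rightarrow> nat) \<Rightarrow> nat \<Rightarrow> real \<Rightarrow> nat" where
  "bit_sel p r x = (\<Sum>j<r. (nat \<lfloor>x * 2 ^ p j\<rfloor> mod 2) * 2 ^ j)"

definition words :: "nat \<Rightarrow> nat \<Rightarrow> nat list set" where
  "words R d = {w. length w = d \<and> set w \<subseteq> {..<R}}"

text \<open>Cyclic counts; indices are 0-based: kap i is the code of epsilon_(i+1).\<close>
definition cyc_count :: "(nat \<Rightarrow> 'a \<Rightarrow> nat) \<Rightarrow> nat \<Rightarrow> nat list \<Rightarrow> 'a \<Rightarrow> nat" where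
  "cyc_count kap n w \<omega> = card {i. i < n \<and> (\<forall>j<length w. kap ((i + j) mod n) \<omega> = w ! j)}"

definition T_SO :: "(nat \<Rightarrow> 'a \<Rightarrow> nat) \<Rightarrow> nat \<Rightarrow> nat \<Rightarrow> nat \<Rightarrow> 'a \<Rightarrow> real" where
  "T_SO kap R m n \<omega> =
     real R ^ m / real n * (\<Sum>w\<in>words R m. (real (cyc_count kap n w \<omega>) - real n / real R ^ m)\<^sup>2)
   - real R ^ (m - 1) / real n *
       (\<Sum>w\<in>words R (m - 1). (real (cyc_count kap n w \<omega>) - real n / real R ^ (m - 1))\<^sup>2)"

text \<open>Window value f(eps_(i+1), ..., eps_(i+m)) (0-based i).\<close>
definition window :: "(nat \<Rightarrow> 'a \<Rightarrow> real) \<Rightarrow> nat \<Rightarrow> ((nat \<Rightarrow> real) \<Rightarrow> real) \<Rightarrow> nat \<Rightarrow> 'a \<Rightarrow> real" where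
  "window eps m f i \<omega> = f (restrict (\<lambda>j. eps (i + j) \<omega>) {..<m})"

definition covar :: "'a measure \<Rightarrow> ('a \<Rightarrow> real) \<Rightarrow> ('a \<Rightarrow> real) \<Rightarrow> real" where
  "covar M X Y = (\<integral>\<omega>. (X \<omega> - (\<integral>x. X x \<partial>M)) * (Y \<omega> - (\<integral>x. Y x \<partial>M)) \<partial>M)"

definition sum_E :: "'a measure \<Rightarrow> (nat \<Rightarrow> 'a \<Rightarrow> real) \<Rightarrow> nat \<Rightarrow> ((nat \<Rightarrow> real) \<Rightarrow> real) \<Rightarrow> real" where
  "sum_E M eps m f = (\<integral>\<omega>. window eps m f 0 \<omega> \<partial>M)"

definition sum_sigma2 :: "'a measure \<Rightarrow> (nat \<Rightarrow> 'a \<Rightarrow> real) \<Rightarrow> nat \<Rightarrow> ((nat \<Rightarrow> real) \<Rightarrow> real) \<Rightarrow> real" where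
  "sum_sigma2 M eps m f =
     covar M (window eps m f 0) (window eps m f 0)
     + 2 * (\<Sum>i\<in>{1..<m}. covar M (window eps m f i) (window eps m f 0))"

definition valid_summing :: "'a measure \<Rightarrow> (nat \<Rightarrow> 'a \<Rightarrow> real) \<Rightarrow> nat \<Rightarrow> ((nat \<Rightarrow> real) \<Rightarrow> real) \<Rightarrow> bool" where
  "valid_summing M eps m f \<longleftrightarrow> m \<ge> 1
     \<and> f \<in> borel_measurable (PiM {..<m} (\<lambda>_. borel))
     \<and> integrable M (window eps m f 0)
     \<and> integrable M (\<lambda>\<omega>. (window eps m f 0 \<omega>)\<^sup>2)
     \<and> sum_sigma2 M eps m f > 0"

definition sum_stat :: "'a measure \<Rightarrow> (nat \<Rightarrow> 'a \<Rightarrow> real) \<Rightarrow> nat \<Rightarrow> ((nat \<Rightarrow> real) \<Rightarrow> real) \<Rightarrow> nat \<Rightarrow> 'a \<Rightarrow> real" where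
  "sum_stat M eps m f n \<omega> =
     (\<Sum>i<n + 1 - m. window eps m f i \<omega> - sum_E M eps m f)
       / (sqrt (sum_sigma2 M eps m f) * sqrt (real (n + 1 - m)))"

definition T_quad :: "'a measure \<Rightarrow> (nat \<Rightarrow> 'a \<Rightarrow> real) \<Rightarrow> nat \<Rightarrow> nat \<Rightarrow> (nat \<Rightarrow> nat \<Rightarrow> real)
    \<Rightarrow> (nat \<Rightarrow> nat) \<Rightarrow> (nat \<Rightarrow> (nat \<Rightarrow> real) \<Rightarrow> real) \<Rightarrow> nat \<Rightarrow> 'a \<Rightarrow> real" where
  "T_quad M eps \<tau> Q d ms fs n \<omega> =
     (\<Sum>i<\<tau>. (\<Sum>q<Q. d i q * sum_stat M eps (ms q) (fs q) n \<omega>)\<^sup>2)"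

definition conv_prob_zero :: "'a measure \<Rightarrow> (nat \<Rightarrow> 'a \<Rightarrow> real) \<Rightarrow> bool" where
  "conv_prob_zero M X \<longleftrightarrow>
     (\<forall>e>0. (\<lambda>n. measure M {\<omega> \<in> space M. e < \<bar>X n \<omega>\<bar>}) \<longlonglongrightarrow> 0)"

end

(*
  Splitting each m-word as u @ [a], the cyclic counts nu satisfy
    T_SO = R^m / n * (SUM u a. (nu (u @ [a]) - nu u / R)^2).
  The centred count nu (u @ [a]) - nu u / R is the cyclic sum over i of
    phi (k_i, ..., k_(i+m-1)) = [k_i ... k_(i+m-2) = u] * ([k_(i+m-1) = a] - 1/R),
  which differs by at most m - 1 from the plain sum D of the n - m + 1 windows, an unnormalised
  summing statistic. The last code of a window is uniform and independent of all earlier ones,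
  so the windows are orthogonal and centred: the summing statistic has sigma^2 = E phi^2 > 0 and
  E D^2 <= n. Hence T_SO differs from the diagonal quadratic form with weights R^m sigma^2 by a
  quantity of expectation O(1 / sqrt n), and Markov's inequality concludes.
*)

theory Submission
  imports Defs "HOL-Real_Asymp.Real_Asymp"
begin

lemma bit_sel_eq_horner_sum:
  "bit_sel p r x = horner_sum of_bool 2 (map (\<lambda>j. odd (nat \<lfloor>x * 2 ^ p j\<rfloor>)) [0..<r])"
  by (simp add: bit_sel_def horner_sum_eq_sum atLeast0LessThan of_bool_odd_eq_mod_2
      del: sum_of_bool_eq)

lemma bit_sel_less: "bit_sel p r x < 2 ^ r"
  using horner_sum_bound[of "map (\<lambda>j. odd (nat \<lfloor>x * 2 ^ p j\<rfloor>)) [0..<r]"]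
  by (simp add: bit_sel_eq_horner_sum)

lemma bit_bit_sel_iff: "bit (bit_sel p r x) j \<longleftrightarrow> j < r \<and> odd (nat \<lfloor>x * 2 ^ p j\<rfloor>)"
  by (auto simp: bit_sel_eq_horner_sum bit_horner_sum_bit_iff)

lemma bit_sel_eq_iff:
  assumes "a < 2 ^ r"
  shows "bit_sel p r x = a \<longleftrightarrow> (\<forall>j<r. odd (nat \<lfloor>x * 2 ^ p j\<rfloor>) = bit a j)"
proof -
  have high: "\<not> bit a j" if "r \<le> j" for j
    using assms that bit_take_bit_iff[of r a j] by (simp add: take_bit_nat_eq_self)
  show ?thesis
  proof
    assume "bit_sel p r x = a"
    then show "\<forall>j<r. odd (nat \<lfloor>x * 2 ^ p j\<rfloor>) = bit a j"
      using bit_bit_sel_iff[of p r x] by simp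
  next
    assume low: "\<forall>j<r. odd (nat \<lfloor>x * 2 ^ p j\<rfloor>) = bit a j"
    show "bit_sel p r x = a"
    proof (rule bit_eqI)
      fix j show "bit (bit_sel p r x) j = bit a j"
        using low high[of j] by (cases "j < r") (simp_all add: bit_bit_sel_iff)
    qed
  qed
qed

lemma odd_floor_pow2_eq_bit:
  fixes x :: real
  assumes "k \<le> P"
  shows "odd (nat \<lfloor>x * 2 ^ k\<rfloor>) \<longleftrightarrow> bit (nat \<lfloor>x * 2 ^ P\<rfloor>) (P - k)"
proof -
  have "(2::real) ^ P = 2 ^ k * 2 ^ (P - k)"
    using assms by (simp flip: power_add)
  then have "\<lfloor>x * 2 ^ k\<rfloor> = \<lfloor>x * 2 ^ P / real_of_int (2 ^ (P - k))\<rfloor>"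
    by simp
  also have "\<dots> = \<lfloor>x * 2 ^ P\<rfloor> div 2 ^ (P - k)"
    by (rule floor_divide_real_eq_div) simp
  finally have "\<lfloor>x * 2 ^ k\<rfloor> = \<lfloor>x * 2 ^ P\<rfloor> div 2 ^ (P - k)" .
  moreover have "nat (a div 2 ^ j) = nat a div 2 ^ j" for a :: int and j :: nat
    by (cases "a \<ge> 0") (simp_all add: nat_div_distrib nat_power_eq div_nonpos_pos_le0)
  ultimately have "nat \<lfloor>x * 2 ^ k\<rfloor> = nat \<lfloor>x * 2 ^ P\<rfloor> div 2 ^ (P - k)"
    by simp
  then show ?thesis by (simp add: bit_iff_odd)
qed

lemma bij_betw_bits:
  "bij_betw (\<lambda>t::nat. restrict (bit t) {..<P}) {..<2 ^ P} ({..<P} \<rightarrow>\<^sub>E (UNIV :: bool set))"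
proof (rule bij_betwI')
  fix s t :: nat assume "s \<in> {..<2 ^ P}" "t \<in> {..<2 ^ P}"
  then have "take_bit P s = s" "take_bit P t = t" by (simp_all add: take_bit_nat_eq_self)
  moreover have "map (bit s) [0..<P] = map (bit t) [0..<P]"
    if eq: "restrict (bit s) {..<P} = restrict (bit t) {..<P}"
  proof (rule map_cong[OF refl])
    fix q assume "q \<in> set [0..<P]"
    then show "bit s q = bit t q" using fun_cong[OF eq, of q] by simp
  qed
  ultimately show "restrict (bit s) {..<P} = restrict (bit t) {..<P} \<longleftrightarrow> s = t"
    by (metis horner_sum_bit_eq_take_bit)
next
  fix f assume f: "f \<in> {..<P} \<rightarrow>\<^sub>E (UNIV :: bool set)"
  define t :: nat where "t = horner_sum of_bool 2 (map f [0..<P])"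
  have "t \<in> {..<2 ^ P}" using horner_sum_bound[of "map f [0..<P]"] by (simp add: t_def)
  moreover have "f = restrict (bit t) {..<P}"
    using f by (auto simp: t_def bit_horner_sum_bit_iff PiE_def extensional_def fun_eq_iff)
  ultimately show "\<exists>t\<in>{..<2 ^ P}. f = restrict (bit (t::nat)) {..<P}" by blast
qed auto

lemma card_prescribed_bits:
  assumes "Q \<subseteq> {..<P}"
  shows "card {t::nat. t < 2 ^ P \<and> (\<forall>q\<in>Q. bit t q = b q)} = 2 ^ (P - card Q)"
proof -
  define S where "S = {t::nat. t < 2 ^ P \<and> (\<forall>q\<in>Q. bit t q = b q)}"
  define B where "B t = restrict (bit t) {..<P}" for t :: nat
  define T where "T = PiE {..<P} (\<lambda>q. if q \<in> Q then {b q} else UNIV)"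
  have bij: "bij_betw B {..<2 ^ P} ({..<P} \<rightarrow>\<^sub>E UNIV)"
    unfolding B_def by (rule bij_betw_bits)
  have "B ` S = T"
  proof
    show "B ` S \<subseteq> T" using assms by (auto simp: S_def B_def T_def)
  next
    show "T \<subseteq> B ` S"
    proof
      fix f assume f: "f \<in> T"
      then have "f \<in> {..<P} \<rightarrow>\<^sub>E UNIV" by (auto simp: T_def)
      then have "f \<in> B ` {..<2 ^ P}" using bij_betw_imp_surj_on[OF bij] by simp
      then obtain t where t: "t < 2 ^ P" "f = B t" by auto
      have "bit t q = b q" if "q \<in> Q" for q
      proof -
        have "q < P" using that assms by auto
        then have "f q = b q" using PiE_mem[OF f[unfolded T_def], of q] that by simp
        then show ?thesis using \<open>q < P\<close> by (simp add: t(2) B_def)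
      qed
      then have "t \<in> S" using t(1) by (simp add: S_def)
      then show "f \<in> B ` S" using t by blast
    qed
  qed
  then have "bij_betw B S T"
    by (intro bij_betw_subset[OF bij]) (auto simp: S_def)
  then have "card S = (\<Prod>q<P. card (if q \<in> Q then {b q} else (UNIV :: bool set)))"
    by (simp add: bij_betw_same_card T_def card_PiE)
  also have "\<dots> = (\<Prod>q\<in>{..<P} - Q. 2)"
    using assms by (intro prod.mono_neutral_cong_right) auto
  also have "\<dots> = 2 ^ (P - card Q)"
    using assms by (simp add: card_Diff_subset finite_subset)
  finally show ?thesis by (simp add: S_def)
qed

lemma measurable_bit_sel [measurable]: "bit_sel p r \<in> borel \<rightarrow>\<^sub>M count_space UNIV"
  unfolding bit_sel_def by measurable

lemma floor_pow2_eq_iff: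
  fixes x :: real
  shows "\<lfloor>x * 2 ^ P\<rfloor> = int t \<longleftrightarrow> x \<in> {real t / 2 ^ P ..< (real t + 1) / 2 ^ P}"
  by (auto simp: floor_eq_iff field_simps)

lemma measure_dyadic_digits:
  assumes "S \<subseteq> {..<2 ^ P}"
  shows "measure lborel {x \<in> {0..<1::real}. nat \<lfloor>x * 2 ^ P\<rfloor> \<in> S} = card S / 2 ^ P"
proof -
  define I where "I t = {real t / 2 ^ P ..< (real t + 1) / 2 ^ P}" for t :: nat
  have union: "{x \<in> {0..<1::real}. nat \<lfloor>x * 2 ^ P\<rfloor> \<in> S} = (\<Union>t\<in>S. I t)"
  proof (intro set_eqI iffI)
    fix x assume "x \<in> {x \<in> {0..<1::real}. nat \<lfloor>x * 2 ^ P\<rfloor> \<in> S}"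
    then have "x \<in> I (nat \<lfloor>x * 2 ^ P\<rfloor>)" "nat \<lfloor>x * 2 ^ P\<rfloor> \<in> S"
      using floor_pow2_eq_iff[of x P "nat \<lfloor>x * 2 ^ P\<rfloor>"] by (auto simp: I_def)
    then show "x \<in> (\<Union>t\<in>S. I t)" by blast
  next
    fix x assume "x \<in> (\<Union>t\<in>S. I t)"
    then obtain t where t: "t \<in> S" "x \<in> I t" by blast
    then have floor: "\<lfloor>x * 2 ^ P\<rfloor> = int t" using floor_pow2_eq_iff by (simp add: I_def)
    have "t + 1 \<le> 2 ^ P" using t(1) assms by (auto simp: Suc_le_eq)
    then have "real t + 1 \<le> 2 ^ P" using of_nat_le_iff[of "t + 1" "2 ^ P", where 'a = real] by simp
    moreover have "real t \<le> x * 2 ^ P" "x * 2 ^ P < real t + 1"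
      using t(2) by (auto simp: I_def field_simps)
    ultimately have "0 \<le> x * 2 ^ P" "x * 2 ^ P < 2 ^ P" by linarith+
    then have "0 \<le> x \<and> x < 1"
      using zero_less_power[of "2::real" P] by (auto simp: zero_le_mult_iff mult_less_cancel_right2)
    then show "x \<in> {x \<in> {0..<1::real}. nat \<lfloor>x * 2 ^ P\<rfloor> \<in> S}"
      using t(1) floor by simp
  qed
  have disj: "disjoint_family_on I S"
    unfolding disjoint_family_on_def I_def using floor_pow2_eq_iff
    by (metis disjoint_iff of_nat_eq_iff)
  have fin: "finite S" using assms finite_subset by blast
  have "measure lborel {x \<in> {0..<1::real}. nat \<lfloor>x * 2 ^ P\<rfloor> \<in> S}
      = (\<Sum>t\<in>S. measure lborel (I t))"
    unfolding union
    by (intro measure_finite_Union[OF fin _ disj]) (auto simp: I_def emeasure_lborel_Ico divide_right_mono)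
  also have "\<dots> = card S / 2 ^ P"
    by (simp add: I_def field_simps)
  finally show ?thesis .
qed

lemma measure_bit_sel_eq:
  assumes inj: "inj_on p {..<r}" and p_pos: "\<forall>j<r. 1 \<le> p j" and a: "a < 2 ^ r"
  shows "measure lborel {x \<in> {0..<1::real}. bit_sel p r x = a} = 1 / 2 ^ r"
proof -
  define P where "P = Max (p ` {..<r})"
  have p_le: "p j \<le> P" if "j < r" for j
    using that by (simp add: P_def)
  define g where "g j = P - p j" for j
  have inj_g: "inj_on g {..<r}"
    using inj p_le unfolding g_def inj_on_def by (metis diff_diff_cancel lessThan_iff)
  have g_less: "g ` {..<r} \<subseteq> {..<P}"
    using p_pos p_le by (force simp: g_def)
  then have "r \<le> P"
    using card_mono[OF finite_lessThan g_less] card_image[OF inj_g] by simp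
  define S where "S = {t::nat. t < 2 ^ P \<and> (\<forall>q\<in>g ` {..<r}. bit t q = bit a (the_inv_into {..<r} g q))}"
  have "card S = 2 ^ (P - r)"
    using card_prescribed_bits[OF g_less] card_image[OF inj_g] by (simp add: S_def)
  have "{x \<in> {0..<1::real}. bit_sel p r x = a} = {x \<in> {0..<1}. nat \<lfloor>x * 2 ^ P\<rfloor> \<in> S}"
  proof -
    have "nat \<lfloor>x * 2 ^ P\<rfloor> < 2 ^ P" if "x \<in> {0..<1::real}" for x
      using that by (simp add: nat_less_iff floor_less_iff)
    moreover have "bit_sel p r x = a \<longleftrightarrow> (\<forall>j<r. bit (nat \<lfloor>x * 2 ^ P\<rfloor>) (g j) = bit a j)" for x
    proof -
      have "odd (nat \<lfloor>x * 2 ^ p j\<rfloor>) = bit (nat \<lfloor>x * 2 ^ P\<rfloor>) (g j)" if "j < r" for j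
        unfolding g_def by (rule odd_floor_pow2_eq_bit[OF p_le[OF that]])
      then show ?thesis unfolding bit_sel_eq_iff[OF a] by auto
    qed
    ultimately show ?thesis
      using the_inv_into_f_f[OF inj_g] by (auto simp: S_def)
  qed
  also have "measure lborel \<dots> = card S / 2 ^ P"
    by (rule measure_dyadic_digits) (auto simp: S_def)
  also have "\<dots> = 2 ^ (P - r) / 2 ^ P"
    using \<open>card S = 2 ^ (P - r)\<close> by simp
  also have "\<dots> = 1 / 2 ^ r"
    using \<open>r \<le> P\<close> by (simp add: power_diff)
  finally show ?thesis .
qed

lemma (in prob_space) prob_bit_sel_uniform:
  assumes [measurable]: "X \<in> borel_measurable M"
    and distr: "distr M lborel X = uniform_measure lborel {0..1}"
    and "inj_on p {..<r}" "\<forall>j<r. 1 \<le> p j" "a < 2 ^ r"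
  shows "prob {\<omega> \<in> space M. bit_sel p r (X \<omega>) = a} = 1 / 2 ^ r"
proof -
  define C where "C = {x. bit_sel p r x = a}"
  have [measurable]: "C \<in> sets borel" unfolding C_def by measurable
  have "{0..1} \<inter> C = {x \<in> {0..<1::real}. bit_sel p r x = a} \<union> ({1} \<inter> C)"
    by (auto simp: C_def)
  moreover have "{1} \<inter> C \<in> null_sets lborel"
    by (intro countable_imp_null_set_lborel countable_finite) simp
  ultimately have "measure lborel ({0..1} \<inter> C) = 1 / 2 ^ r"
    using measure_bit_sel_eq[OF assms(3-5)] by (simp add: measure_Un_null_set)
  moreover have "prob {\<omega> \<in> space M. bit_sel p r (X \<omega>) = a} = measure (distr M lborel X) C"
    by (simp add: measure_distr C_def vimage_def Int_def conj_commute)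
  ultimately show ?thesis
    using distr by simp
qed

lemma finite_words: "finite (words R d)"
  using finite_lists_length_eq[of "{..<R}" d] by (simp add: words_def conj_commute)

lemma words_Suc: "words R (Suc d) = (\<lambda>(u, a). u @ [a]) ` (words R d \<times> {..<R})"
proof (intro set_eqI iffI)
  fix w assume w: "w \<in> words R (Suc d)"
  then have "w \<noteq> []" by (auto simp: words_def)
  then have "w = butlast w @ [last w]" by simp
  moreover have "butlast w \<in> words R d"
    using w by (auto simp: words_def dest: in_set_butlastD)
  moreover have "last w \<in> set w" using \<open>w \<noteq> []\<close> by simp
  then have "last w < R" using w by (auto simp: words_def)
  ultimately show "w \<in> (\<lambda>(u, a). u @ [a]) ` (words R d \<times> {..<R})"
    by (intro image_eqI[where x = "(butlast w, last w)"]) auto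
qed (auto simp: words_def)

lemma sum_words_Suc:
  "(\<Sum>w\<in>words R (Suc d). g w) = (\<Sum>u\<in>words R d. \<Sum>a<R. g (u @ [a]))"
proof -
  have "inj_on (\<lambda>(u, a). u @ [a]) (words R d \<times> {..<R})"
    by (auto simp: inj_on_def)
  then show ?thesis
    by (simp add: words_Suc sum.reindex sum.cartesian_product split_def)
qed

lemma sum_sq_deviation_decomp:
  fixes x :: "'b \<Rightarrow> real" and c :: real
  assumes "finite A" "A \<noteq> {}"
  shows "(\<Sum>a\<in>A. (x a - c)\<^sup>2)
    = (\<Sum>a\<in>A. (x a - sum x A / card A)\<^sup>2) + (sum x A - card A * c)\<^sup>2 / card A"
proof -
  have gen: "(\<Sum>a\<in>A. (x a - t)\<^sup>2) = (\<Sum>a\<in>A. (x a)\<^sup>2) - 2 * t * sum x A + card A * t\<^sup>2" for t :: real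
  proof -
    have "(\<Sum>a\<in>A. (x a - t)\<^sup>2) = (\<Sum>a\<in>A. (x a)\<^sup>2 - 2 * t * x a + t\<^sup>2)"
      by (simp add: power2_diff algebra_simps)
    then show ?thesis
      by (simp add: sum.distrib sum_subtractf sum_distrib_left)
  qed
  have "card A > 0" using assms by (simp add: card_gt_0_iff)
  then show ?thesis
    unfolding gen[of c] gen[of "sum x A / card A"] by (simp add: field_simps power2_eq_square)
qed

lemma cyc_count_snoc:
  "cyc_count kap n (u @ [a]) \<omega>
    = card {i \<in> {i. i < n \<and> (\<forall>j<length u. kap ((i + j) mod n) \<omega> = u ! j)}.
        kap ((i + length u) mod n) \<omega> = a}"
  unfolding cyc_count_def
  by (intro arg_cong[where f = card]) (auto simp: nth_append less_Suc_eq)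

lemma cyc_count_eq_sum_snoc:
  assumes "\<And>i. kap i \<omega> < R"
  shows "cyc_count kap n u \<omega> = (\<Sum>a<R. cyc_count kap n (u @ [a]) \<omega>)"
proof -
  define A where "A = {i. i < n \<and> (\<forall>j<length u. kap ((i + j) mod n) \<omega> = u ! j)}"
  define f where "f i = kap ((i + length u) mod n) \<omega>" for i
  have "(\<Sum>a<R. cyc_count kap n (u @ [a]) \<omega>) = (\<Sum>a<R. card {i \<in> A. f i = a})"
    by (simp add: cyc_count_snoc A_def f_def)
  also have "\<dots> = card A"
    using sum.group[of A "{..<R}" f "\<lambda>_. 1::nat"] assms by (auto simp: A_def f_def)
  finally show ?thesis by (simp add: cyc_count_def A_def)
qed

lemma T_SO_eq_sum_sq:
  assumes "1 \<le> m" and kap_less: "\<And>i \<omega>. kap i \<omega> < R"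
  shows "T_SO kap R m n \<omega> = real R ^ m / real n * (\<Sum>u\<in>words R (m - 1). \<Sum>a<R.
      (real (cyc_count kap n (u @ [a]) \<omega>) - real (cyc_count kap n u \<omega>) / real R)\<^sup>2)"
proof -
  obtain k where m: "m = Suc k" using assms(1) by (cases m) auto
  have "R > 0" using kap_less[of 0 \<omega>] by simp
  define x where "x u a = real (cyc_count kap n (u @ [a]) \<omega>)" for u a
  define c where "c = real n / real R ^ m"
  have count: "real (cyc_count kap n u \<omega>) = sum (x u) {..<R}" for u
    unfolding x_def by (subst cyc_count_eq_sum_snoc[of kap \<omega> R]) (simp_all add: kap_less)
  have "(\<Sum>w\<in>words R m. (real (cyc_count kap n w \<omega>) - real n / real R ^ m)\<^sup>2)
      = (\<Sum>u\<in>words R k. \<Sum>a<R. (x u a - c)\<^sup>2)"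
    unfolding m sum_words_Suc by (simp add: x_def c_def m)
  moreover have "(\<Sum>u\<in>words R (m - 1). (real (cyc_count kap n u \<omega>) - real n / real R ^ (m - 1))\<^sup>2)
      = (\<Sum>u\<in>words R k. (sum (x u) {..<R} - R * c)\<^sup>2)"
    using \<open>R > 0\<close> by (simp add: count c_def m)
  moreover have "real R ^ (m - 1) / real n = real R ^ m / real n / R"
    using \<open>R > 0\<close> by (simp add: m)
  ultimately have "T_SO kap R m n \<omega> = real R ^ m / real n * (\<Sum>u\<in>words R k. \<Sum>a<R. (x u a - c)\<^sup>2)
      - real R ^ m / real n * (\<Sum>u\<in>words R k. (sum (x u) {..<R} - R * c)\<^sup>2 / R)"
    by (simp add: T_SO_def flip: sum_divide_distrib)
  also have "\<dots> = real R ^ m / real n *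
      (\<Sum>u\<in>words R k. (\<Sum>a<R. (x u a - c)\<^sup>2) - (sum (x u) {..<R} - R * c)\<^sup>2 / R)"
    by (simp add: sum_subtractf right_diff_distrib)
  also have "\<dots> = real R ^ m / real n *
      (\<Sum>u\<in>words R k. \<Sum>a<R. (x u a - sum (x u) {..<R} / R)\<^sup>2)"
  proof -
    have "0 \<in> {..<R}" using \<open>R > 0\<close> by simp
    then have "{..<R} \<noteq> {}" by blast
    then have "(\<Sum>a<R. (x u a - c)\<^sup>2) - (sum (x u) {..<R} - R * c)\<^sup>2 / R
        = (\<Sum>a<R. (x u a - sum (x u) {..<R} / R)\<^sup>2)" for u
      using sum_sq_deviation_decomp[OF finite_lessThan, of R "x u" c] by simp
    then show ?thesis by simp
  qed
  finally show ?thesis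
    by (simp add: m flip: x_def count)
qed

definition centered_match :: "nat \<Rightarrow> nat list \<Rightarrow> nat \<Rightarrow> (nat \<Rightarrow> nat) \<Rightarrow> real" where
  "centered_match R u a \<kappa> =
     of_bool (\<forall>j<length u. \<kappa> j = u ! j) * (of_bool (\<kappa> (length u) = a) - 1 / real R)"

lemma centered_match_cong:
  "(\<And>j. j \<le> length u \<Longrightarrow> \<kappa> j = \<kappa>' j) \<Longrightarrow> centered_match R u a \<kappa> = centered_match R u a \<kappa>'"
  by (simp add: centered_match_def)

lemma abs_centered_match_le: "1 \<le> R \<Longrightarrow> \<bar>centered_match R u a \<kappa>\<bar> \<le> 1"
  by (simp add: centered_match_def abs_mult field_simps)

lemma real_card_eq_sum_of_bool: "real (card {i::nat. i < n \<and> P i}) = (\<Sum>i<n. of_bool (P i))"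
proof -
  have "{i. i < n \<and> P i} = {..<n} \<inter> {i. P i}" by auto
  moreover have "(\<Sum>i<n. of_bool (P i)) = real (card ({..<n} \<inter> {i. P i}))"
    using sum_of_bool_eq[of "{..<n}" P] by simp
  ultimately show ?thesis by simp
qed

lemma sum_cyclic_centered_match:
  "(\<Sum>i<n. centered_match R u a (\<lambda>j. kap ((i + j) mod n) \<omega>))
    = real (cyc_count kap n (u @ [a]) \<omega>) - real (cyc_count kap n u \<omega>) / real R"
proof -
  define P where "P i \<longleftrightarrow> (\<forall>j<length u. kap ((i + j) mod n) \<omega> = u ! j)" for i
  define Q where "Q i \<longleftrightarrow> kap ((i + length u) mod n) \<omega> = a" for i
  have "cyc_count kap n (u @ [a]) \<omega> = card {i. i < n \<and> P i \<and> Q i}"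
    unfolding cyc_count_def P_def Q_def
    by (intro arg_cong[where f = card]) (auto simp: nth_append less_Suc_eq)
  moreover have "cyc_count kap n u \<omega> = card {i. i < n \<and> P i}"
    by (simp add: cyc_count_def P_def)
  moreover have "centered_match R u a (\<lambda>j. kap ((i + j) mod n) \<omega>)
      = of_bool (P i \<and> Q i) - of_bool (P i) / R" for i
    by (auto simp: centered_match_def P_def Q_def)
  then have "(\<Sum>i<n. centered_match R u a (\<lambda>j. kap ((i + j) mod n) \<omega>))
      = (\<Sum>i<n. of_bool (P i \<and> Q i)) - (\<Sum>i<n. of_bool (P i)) / R"
    by (simp add: sum_subtractf sum_divide_distrib del: sum_of_bool_eq)
  ultimately show ?thesis
    by (simp only: real_card_eq_sum_of_bool)
qed

lemma abs_sum_cyclic_centered_match_diff_le: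
  assumes "1 \<le> R"
  shows "\<bar>(\<Sum>i<n. centered_match R u a (\<lambda>j. \<kappa> ((i + j) mod n)))
           - (\<Sum>i<n - length u. centered_match R u a (\<lambda>j. \<kappa> (i + j)))\<bar> \<le> length u"
proof -
  define f where "f i = centered_match R u a (\<lambda>j. \<kappa> ((i + j) mod n))" for i
  have "(\<Sum>i<n. f i) = (\<Sum>i<n - length u. f i) + (\<Sum>i\<in>{n - length u..<n}. f i)"
    using sum.atLeastLessThan_concat[of 0 "n - length u" n f] by (simp add: atLeast0LessThan)
  moreover have "f i = centered_match R u a (\<lambda>j. \<kappa> (i + j))" if "i < n - length u" for i
    unfolding f_def using that by (intro centered_match_cong) simp
  moreover have "\<bar>\<Sum>i\<in>{n - length u..<n}. f i\<bar> \<le> length u"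
  proof -
    have "\<bar>\<Sum>i\<in>{n - length u..<n}. f i\<bar> \<le> (\<Sum>i\<in>{n - length u..<n}. 1)"
      unfolding f_def using assms by (intro order.trans[OF sum_abs] sum_mono abs_centered_match_le)
    also have "\<dots> \<le> length u" by simp
    finally show ?thesis .
  qed
  ultimately show ?thesis
    by (simp add: f_def)
qed

lemma abs_sq_div_diff_le:
  fixes C D K n N :: real
  assumes CD: "\<bar>C - D\<bar> \<le> K" and N: "0 < N" "N \<le> n"
  shows "\<bar>C\<^sup>2 / n - D\<^sup>2 / N\<bar> \<le> K\<^sup>2 / n + K / sqrt n + D\<^sup>2 * (K / (n * sqrt n) + (n - N) / (n * N))"
proof -
  have n: "0 < n" "0 < sqrt n" using N by auto
  have "\<bar>C\<^sup>2 - D\<^sup>2\<bar> = \<bar>C - D\<bar> * \<bar>C + D\<bar>"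
    by (simp add: power2_eq_square abs_mult[symmetric] algebra_simps)
  also have "\<dots> \<le> K * (K + 2 * \<bar>D\<bar>)"
    using CD by (intro mult_mono) auto
  \<comment> \<open>AM-GM keeps the bound linear in D^2, whose expectation is controlled.\<close>
  also have "2 * \<bar>D\<bar> \<le> sqrt n + D\<^sup>2 / sqrt n"
  proof -
    have "0 \<le> (sqrt n - \<bar>D\<bar>)\<^sup>2" by simp
    then show ?thesis using n by (simp add: power2_diff field_simps)
  qed
  then have "K * (K + 2 * \<bar>D\<bar>) \<le> K * (K + (sqrt n + D\<^sup>2 / sqrt n))"
    using CD by (intro mult_left_mono) auto
  finally have "\<bar>C\<^sup>2 - D\<^sup>2\<bar> / n \<le> K\<^sup>2 / n + K / sqrt n + D\<^sup>2 * (K / (n * sqrt n))"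
    using n by (simp add: divide_right_mono field_simps power2_eq_square)
  moreover have "C\<^sup>2 / n - D\<^sup>2 / N = (C\<^sup>2 - D\<^sup>2) / n - D\<^sup>2 * ((n - N) / (n * N))"
    using n N by (simp add: field_simps)
  then have "\<bar>C\<^sup>2 / n - D\<^sup>2 / N\<bar> \<le> \<bar>C\<^sup>2 - D\<^sup>2\<bar> / n + D\<^sup>2 * ((n - N) / (n * N))"
    using N abs_triangle_ineq4[of "(C\<^sup>2 - D\<^sup>2) / n" "D\<^sup>2 * ((n - N) / (n * N))"]
    by (simp add: abs_divide abs_mult)
  ultimately show ?thesis
    by (simp add: algebra_simps)
qed

lemma (in prob_space) conv_prob_zero_if_dominated:
  assumes dom: "eventually (\<lambda>n. \<forall>\<omega>\<in>space M. \<bar>X n \<omega>\<bar> \<le> Y n \<omega>) sequentially"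
    and int: "\<And>n. integrable M (Y n)"
    and bound: "eventually (\<lambda>n. expectation (Y n) \<le> \<beta> n) sequentially" and lim: "\<beta> \<longlonglongrightarrow> 0"
  shows "conv_prob_zero M X"
  unfolding conv_prob_zero_def
proof (intro allI impI)
  fix e :: real assume "0 < e"
  have upper: "eventually (\<lambda>n. measure M {\<omega> \<in> space M. e < \<bar>X n \<omega>\<bar>} \<le> \<beta> n / e) sequentially"
    using dom bound
  proof eventually_elim
    case (elim n)
    have [measurable]: "Y n \<in> borel_measurable M" using int by auto
    have "measure M {\<omega> \<in> space M. e < \<bar>X n \<omega>\<bar>} \<le> measure M {\<omega> \<in> space M. e \<le> Y n \<omega>}"
      using elim by (intro finite_measure_mono) (auto intro: order.trans less_imp_le)
    also have "\<dots> \<le> expectation (Y n) / e"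
      using elim \<open>0 < e\<close>
      by (intro integral_Markov_inequality_measure[OF int] AE_I2) (auto intro: order.trans[OF abs_ge_zero])
    also have "\<dots> \<le> \<beta> n / e"
      using elim \<open>0 < e\<close> by (simp add: divide_right_mono)
    finally show ?case .
  qed
  have lower: "eventually (\<lambda>n. 0 \<le> measure M {\<omega> \<in> space M. e < \<bar>X n \<omega>\<bar>}) sequentially"
    by simp
  have "(\<lambda>n. \<beta> n / e) \<longlonglongrightarrow> 0"
    using tendsto_divide_zero[OF lim] by simp
  then show "(\<lambda>n. measure M {\<omega> \<in> space M. e < \<bar>X n \<omega>\<bar>}) \<longlonglongrightarrow> 0"
    by (rule tendsto_sandwich[OF lower upper tendsto_const])
qed

lemma T_quad_diagonal:
  "T_quad M eps Q Q (\<lambda>i q. if i = q then c q else 0) ms fs n \<omega>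
    = (\<Sum>q<Q. (c q * sum_stat M eps (ms q) (fs q) n \<omega>)\<^sup>2)"
  unfolding T_quad_def
proof (intro sum.cong refl)
  fix i assume "i \<in> {..<Q}"
  have "(\<Sum>q<Q. (if i = q then c q else 0) * sum_stat M eps (ms q) (fs q) n \<omega>)
      = (\<Sum>q<Q. if q = i then c q * sum_stat M eps (ms q) (fs q) n \<omega> else 0)"
    by (intro sum.cong) auto
  then show "(\<Sum>q<Q. (if i = q then c q else 0) * sum_stat M eps (ms q) (fs q) n \<omega>)\<^sup>2
      = (c i * sum_stat M eps (ms i) (fs i) n \<omega>)\<^sup>2"
    using \<open>i \<in> {..<Q}\<close> by simp
qed

(* The measurability prover cannot decide l \<in> I for symbolic indices; off I the component is
  the constant undefined. *)
lemma measurable_PiM_component [measurable]: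
  "(\<lambda>y. y l) \<in> borel_measurable (PiM I (\<lambda>_. borel :: real measure))"
proof (cases "l \<in> I")
  case False
  then have "\<forall>y\<in>space (PiM I (\<lambda>_. borel :: real measure)). y l = undefined"
    by (auto simp: space_PiM PiE_def extensional_def)
  then show ?thesis
    using measurable_cong[of "PiM I (\<lambda>_. borel :: real measure)" "\<lambda>y. y l" "\<lambda>y. undefined" borel]
    by simp
qed simp

lemma (in prob_space) expectation_mult_next_indep:
  fixes X :: "nat \<Rightarrow> 'a \<Rightarrow> real" and G :: "(nat \<Rightarrow> real) \<Rightarrow> real" and h :: "real \<Rightarrow> real"
  assumes indep: "indep_vars (\<lambda>_. borel) X UNIV"
    and G [measurable]: "G \<in> borel_measurable (PiM {..<k} (\<lambda>_. borel))" and G_le: "\<And>y. \<bar>G y\<bar> \<le> B"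
    and h [measurable]: "h \<in> borel_measurable borel" and h_le: "\<And>x. \<bar>h x\<bar> \<le> C"
  shows "expectation (\<lambda>\<omega>. G (restrict (\<lambda>j. X j \<omega>) {..<k}) * h (X k \<omega>))
    = expectation (\<lambda>\<omega>. G (restrict (\<lambda>j. X j \<omega>) {..<k})) * expectation (\<lambda>\<omega>. h (X k \<omega>))"
proof -
  have [measurable]: "X i \<in> borel_measurable M" for i
    using indep by (simp add: indep_vars_def)
  have iv: "indep_var (PiM {..<k} (\<lambda>_. borel)) (\<lambda>\<omega>. restrict (\<lambda>j. X j \<omega>) {..<k})
      (PiM {k} (\<lambda>_. borel)) (\<lambda>\<omega>. restrict (\<lambda>j. X j \<omega>) {k})"
    by (rule indep_var_restrict[OF indep]) auto
  have hk: "(\<lambda>y. h (y k)) \<in> borel_measurable (PiM {k} (\<lambda>_. borel))" by measurable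
  have "indep_var borel (\<lambda>\<omega>. G (restrict (\<lambda>j. X j \<omega>) {..<k})) borel (\<lambda>\<omega>. h (X k \<omega>))"
    using indep_var_compose[OF iv G hk] by (simp add: comp_def)
  moreover have "integrable M (\<lambda>\<omega>. G (restrict (\<lambda>j. X j \<omega>) {..<k}))"
    using G_le by (intro integrable_const_bound[where B = B]) auto
  moreover have "integrable M (\<lambda>\<omega>. h (X k \<omega>))"
    using h_le by (intro integrable_const_bound[where B = C]) auto
  ultimately show ?thesis
    by (rule indep_var_lebesgue_integral)
qed

locale indep_uniform_codes = prob_space M for M :: "'a measure" +
  fixes eps :: "nat \<Rightarrow> 'a \<Rightarrow> real" and code :: "real \<Rightarrow> nat" and R :: nat
  assumes indep_eps: "indep_vars (\<lambda>_. borel) eps UNIV"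
    and measurable_code [measurable]: "code \<in> borel \<rightarrow>\<^sub>M count_space UNIV"
    and code_less: "\<And>x. code x < R"
    and prob_code_eq: "\<And>i a. a < R \<Longrightarrow> prob {\<omega> \<in> space M. code (eps i \<omega>) = a} = 1 / R"
    and R_gt_1: "1 < R"
begin

lemma measurable_eps [measurable]: "eps i \<in> borel_measurable M"
  using indep_eps by (simp add: indep_vars_def)

definition match_fun :: "nat list \<Rightarrow> nat \<Rightarrow> (nat \<Rightarrow> real) \<Rightarrow> real" where
  "match_fun u a x = centered_match R u a (\<lambda>j. code (x j))"

definition cmatch :: "nat list \<Rightarrow> nat \<Rightarrow> nat \<Rightarrow> 'a \<Rightarrow> real" where
  "cmatch u a i \<omega> = centered_match R u a (\<lambda>j. code (eps (i + j) \<omega>))"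

lemma window_match_fun: "window eps (Suc (length u)) (match_fun u a) i = cmatch u a i"
  by (auto simp: fun_eq_iff window_def match_fun_def cmatch_def intro: centered_match_cong)

lemma measurable_match_fun [measurable]: "match_fun u a \<in> borel_measurable (PiM I (\<lambda>_. borel))"
  unfolding match_fun_def centered_match_def by measurable

lemma measurable_cmatch [measurable]: "cmatch u a i \<in> borel_measurable M"
  unfolding cmatch_def centered_match_def by measurable

lemma abs_cmatch_le: "\<bar>cmatch u a i \<omega>\<bar> \<le> 1"
  unfolding cmatch_def using R_gt_1 by (intro abs_centered_match_le) simp

lemma integrable_cmatch_mult: "integrable M (\<lambda>\<omega>. cmatch u a i \<omega> * cmatch u' a' i' \<omega>)"
  using abs_cmatch_le by (intro integrable_const_bound[where B = 1]) (auto simp: abs_mult intro!: mult_le_one)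

lemma integrable_cmatch: "integrable M (cmatch u a i)"
  using abs_cmatch_le by (intro integrable_const_bound[where B = 1]) auto

lemma expectation_code_indicator:
  assumes "a < R"
  shows "expectation (\<lambda>\<omega>. of_bool (code (eps k \<omega>) = a)) = 1 / R"
proof -
  have "expectation (\<lambda>\<omega>. of_bool (code (eps k \<omega>) = a))
      = expectation (indicator {\<omega> \<in> space M. code (eps k \<omega>) = a})"
    by (intro Bochner_Integration.integral_cong) (auto simp: indicator_def)
  also have "\<dots> = prob {\<omega> \<in> space M. code (eps k \<omega>) = a}"
    by (simp add: Int_def conj_commute)
  finally show ?thesis
    using prob_code_eq[OF assms, of k] by simp
qed

lemma expectation_code_centered:
  assumes "a < R"
  shows "expectation (\<lambda>\<omega>. of_bool (code (eps k \<omega>) = a) - 1 / R) = 0"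
proof -
  have "integrable M (\<lambda>\<omega>. of_bool (code (eps k \<omega>) = a) :: real)"
    by (intro integrable_const_bound[where B = 1]) auto
  then show ?thesis
    using expectation_code_indicator[OF assms] by (simp add: prob_space)
qed

lemma expectation_mult_cmatch_past:
  fixes G :: "(nat \<Rightarrow> real) \<Rightarrow> real"
  assumes a: "a < R"
    and G [measurable]: "G \<in> borel_measurable (PiM {..<i + length u} (\<lambda>_. borel))"
    and G_le: "\<And>y. \<bar>G y\<bar> \<le> B"
  shows "expectation (\<lambda>\<omega>. G (restrict (\<lambda>j. eps j \<omega>) {..<i + length u}) * cmatch u a i \<omega>) = 0"
proof -
  define G' where "G' y = G y * of_bool (\<forall>j<length u. code (y (i + j)) = u ! j)" for y
  define h where "h x = of_bool (code x = a) - 1 / real R" for x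
  have G'_le: "\<bar>G' y\<bar> \<le> B" for y
    using G_le[of y] by (auto simp: G'_def)
  have h_le: "\<bar>h x\<bar> \<le> 1" for x
    using R_gt_1 by (auto simp: h_def)
  have G': "G' \<in> borel_measurable (PiM {..<i + length u} (\<lambda>_. borel))" unfolding G'_def by measurable
  have h: "h \<in> borel_measurable borel" unfolding h_def by measurable
  have "G (restrict (\<lambda>j. eps j \<omega>) {..<i + length u}) * cmatch u a i \<omega>
      = G' (restrict (\<lambda>j. eps j \<omega>) {..<i + length u}) * h (eps (i + length u) \<omega>)" for \<omega>
    unfolding G'_def h_def cmatch_def centered_match_def by auto
  then have "expectation (\<lambda>\<omega>. G (restrict (\<lambda>j. eps j \<omega>) {..<i + length u}) * cmatch u a i \<omega>)
      = expectation (\<lambda>\<omega>. G' (restrict (\<lambda>j. eps j \<omega>) {..<i + length u}))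
        * expectation (\<lambda>\<omega>. h (eps (i + length u) \<omega>))"
    using expectation_mult_next_indep[OF indep_eps G' G'_le h h_le] by simp
  also have "expectation (\<lambda>\<omega>. h (eps (i + length u) \<omega>)) = 0"
    unfolding h_def by (rule expectation_code_centered[OF a])
  finally show ?thesis by (simp only: mult_zero_right)
qed

lemma expectation_cmatch: "a < R \<Longrightarrow> expectation (cmatch u a i) = 0"
  using expectation_mult_cmatch_past[where G = "\<lambda>_. 1" and B = 1] by simp

lemma expectation_cmatch_mult_cmatch:
  assumes "a < R" "i \<noteq> i'"
  shows "expectation (\<lambda>\<omega>. cmatch u a i \<omega> * cmatch u a i' \<omega>) = 0"
proof -
  have past: "expectation (\<lambda>\<omega>. cmatch u a i \<omega> * cmatch u a i' \<omega>) = 0" if "i < i'" for i i'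
  proof -
    define G where "G y = centered_match R u a (\<lambda>j. code (y (i + j)))" for y
    have "G (restrict (\<lambda>j. eps j \<omega>) {..<i' + length u}) = cmatch u a i \<omega>" for \<omega>
      unfolding G_def cmatch_def using that by (intro centered_match_cong) auto
    moreover have "G \<in> borel_measurable (PiM {..<i' + length u} (\<lambda>_. borel))"
      unfolding G_def centered_match_def by measurable
    moreover have "\<bar>G y\<bar> \<le> 1" for y
      unfolding G_def using R_gt_1 by (intro abs_centered_match_le) simp
    ultimately show ?thesis
      using expectation_mult_cmatch_past[OF assms(1), where i = i' and u = u and G = G and B = 1] by simp
  qed
  show ?thesis
    using assms(2) past[of i i'] past[of i' i] by (cases "i < i'") (simp_all add: mult.commute)
qed

lemma expectation_prefix_indicator:
  assumes "\<And>j. j < n \<Longrightarrow> v j < R"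
  shows "expectation (\<lambda>\<omega>. of_bool (\<forall>j<n. code (eps j \<omega>) = v j)) = (1 / R) ^ n"
  using assms
proof (induction n)
  case 0
  then show ?case by (simp add: prob_space)
next
  case (Suc n)
  define G where "G y = (of_bool (\<forall>j<n. code (y j) = v j) :: real)" for y
  define h where "h x = (of_bool (code x = v n) :: real)" for x
  have "of_bool (\<forall>j<Suc n. code (eps j \<omega>) = v j) = G (restrict (\<lambda>j. eps j \<omega>) {..<n}) * h (eps n \<omega>)"
    for \<omega> by (auto simp: G_def h_def less_Suc_eq)
  moreover have "G (restrict (\<lambda>j. eps j \<omega>) {..<n}) = of_bool (\<forall>j<n. code (eps j \<omega>) = v j)" for \<omega>
    by (simp add: G_def)
  moreover have "expectation (\<lambda>\<omega>. G (restrict (\<lambda>j. eps j \<omega>) {..<n}) * h (eps n \<omega>))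
      = expectation (\<lambda>\<omega>. G (restrict (\<lambda>j. eps j \<omega>) {..<n})) * expectation (\<lambda>\<omega>. h (eps n \<omega>))"
    by (rule expectation_mult_next_indep[OF indep_eps, where B = 1 and C = 1]) (auto simp: G_def h_def)
  ultimately show ?case
    using Suc expectation_code_indicator[of "v n" n] by (simp add: h_def)
qed

definition cmatch_var :: "nat list \<Rightarrow> nat \<Rightarrow> real" where
  "cmatch_var u a = expectation (\<lambda>\<omega>. (cmatch u a 0 \<omega>)\<^sup>2)"

lemma cmatch_var_eq:
  assumes u: "set u \<subseteq> {..<R}" and a: "a < R"
  shows "cmatch_var u a = (1 / R) ^ Suc (length u) * (1 - 1 / R)"
proof -
  define G where "G y = (of_bool (\<forall>j<length u. code (y j) = u ! j) :: real)" for y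
  define h where "h x = (of_bool (code x = a) - 1 / real R)\<^sup>2" for x
  have h_eq: "h x = of_bool (code x = a) * (1 - 2 / R) + 1 / R\<^sup>2" for x
    using R_gt_1 by (cases "code x = a") (simp_all add: h_def power2_eq_square field_simps)
  have "(cmatch u a 0 \<omega>)\<^sup>2 = G (restrict (\<lambda>j. eps j \<omega>) {..<length u}) * h (eps (length u) \<omega>)" for \<omega>
    by (simp add: cmatch_def centered_match_def G_def h_def power_mult_distrib)
  moreover have "expectation (\<lambda>\<omega>. G (restrict (\<lambda>j. eps j \<omega>) {..<length u}) * h (eps (length u) \<omega>))
      = expectation (\<lambda>\<omega>. G (restrict (\<lambda>j. eps j \<omega>) {..<length u}))
        * expectation (\<lambda>\<omega>. h (eps (length u) \<omega>))"
    using R_gt_1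
    by (intro expectation_mult_next_indep[OF indep_eps, where B = 1 and C = 1])
       (auto simp: G_def h_def abs_square_le_1 field_simps)
  moreover have "expectation (\<lambda>\<omega>. G (restrict (\<lambda>j. eps j \<omega>) {..<length u})) = (1 / R) ^ length u"
    using expectation_prefix_indicator[of "length u" "nth u"] u by (simp add: G_def subset_iff)
  moreover have "expectation (\<lambda>\<omega>. h (eps (length u) \<omega>)) = 1 / R * (1 - 1 / R)"
  proof -
    have "integrable M (\<lambda>\<omega>. of_bool (code (eps (length u) \<omega>) = a) :: real)"
      by (intro integrable_const_bound[where B = 1]) auto
    then show ?thesis
      using expectation_code_indicator[OF a] R_gt_1
      by (simp add: h_eq prob_space power2_eq_square field_simps)
  qed
  ultimately show ?thesis by (simp add: cmatch_var_def)
qed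

definition cmatch_sum :: "nat list \<Rightarrow> nat \<Rightarrow> nat \<Rightarrow> 'a \<Rightarrow> real" where
  "cmatch_sum u a N \<omega> = (\<Sum>i<N. cmatch u a i \<omega>)"

lemma measurable_cmatch_sum [measurable]: "cmatch_sum u a N \<in> borel_measurable M"
  unfolding cmatch_sum_def by measurable

lemma integrable_cmatch_sum_sq: "integrable M (\<lambda>\<omega>. (cmatch_sum u a N \<omega>)\<^sup>2)"
proof (rule integrable_const_bound[where B = "(real N)\<^sup>2"])
  have "\<bar>cmatch_sum u a N \<omega>\<bar> \<le> real N" for \<omega>
    unfolding cmatch_sum_def
    using order.trans[OF sum_abs sum_mono[of "{..<N}" "\<lambda>i. \<bar>cmatch u a i \<omega>\<bar>" "\<lambda>_. 1"]]
    by (simp add: abs_cmatch_le)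
  then have "(cmatch_sum u a N \<omega>)\<^sup>2 \<le> (real N)\<^sup>2" for \<omega>
    using abs_le_square_iff[of "cmatch_sum u a N \<omega>" "real N"] by simp
  then show "AE \<omega> in M. norm ((cmatch_sum u a N \<omega>)\<^sup>2) \<le> (real N)\<^sup>2"
    by simp
qed simp

lemma expectation_cmatch_sum_sq_le:
  assumes "a < R"
  shows "expectation (\<lambda>\<omega>. (cmatch_sum u a N \<omega>)\<^sup>2) \<le> N"
proof -
  have "expectation (\<lambda>\<omega>. (cmatch_sum u a N \<omega>)\<^sup>2)
      = (\<Sum>i<N. \<Sum>j<N. expectation (\<lambda>\<omega>. cmatch u a i \<omega> * cmatch u a j \<omega>))"
    by (simp add: cmatch_sum_def power2_eq_square sum_product integrable_cmatch_mult)
  also have "\<dots> = (\<Sum>i<N. expectation (\<lambda>\<omega>. cmatch u a i \<omega> * cmatch u a i \<omega>))"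
  proof (intro sum.cong refl)
    fix i assume "i \<in> {..<N}"
    have "(\<Sum>j<N. expectation (\<lambda>\<omega>. cmatch u a i \<omega> * cmatch u a j \<omega>))
        = (\<Sum>j<N. if j = i then expectation (\<lambda>\<omega>. cmatch u a i \<omega> * cmatch u a i \<omega>) else 0)"
      using expectation_cmatch_mult_cmatch[OF assms] by (intro sum.cong refl) auto
    then show "(\<Sum>j<N. expectation (\<lambda>\<omega>. cmatch u a i \<omega> * cmatch u a j \<omega>))
        = expectation (\<lambda>\<omega>. cmatch u a i \<omega> * cmatch u a i \<omega>)"
      using \<open>i \<in> {..<N}\<close> by simp
  qed
  also have "\<dots> \<le> (\<Sum>i<N. 1)"
  proof (intro sum_mono)
    fix i
    have "cmatch u a i \<omega> * cmatch u a i \<omega> \<le> 1" for \<omega>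
      using abs_cmatch_le[of u a i \<omega>] abs_square_le_1[of "cmatch u a i \<omega>"] by (simp add: power2_eq_square)
    then have "expectation (\<lambda>\<omega>. cmatch u a i \<omega> * cmatch u a i \<omega>) \<le> expectation (\<lambda>_. 1)"
      by (intro integral_mono integrable_cmatch_mult) auto
    then show "expectation (\<lambda>\<omega>. cmatch u a i \<omega> * cmatch u a i \<omega>) \<le> 1"
      by (simp add: prob_space)
  qed
  finally show ?thesis by simp
qed

lemma sum_E_match_fun: "a < R \<Longrightarrow> sum_E M eps (Suc (length u)) (match_fun u a) = 0"
  by (simp add: sum_E_def window_match_fun expectation_cmatch)

lemma sum_sigma2_match_fun:
  assumes "a < R"
  shows "sum_sigma2 M eps (Suc (length u)) (match_fun u a) = cmatch_var u a"
proof -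
  have "covar M (cmatch u a i) (cmatch u a 0) = expectation (\<lambda>\<omega>. cmatch u a i \<omega> * cmatch u a 0 \<omega>)" for i
    by (simp add: covar_def expectation_cmatch[OF assms])
  then show ?thesis
    using expectation_cmatch_mult_cmatch[OF assms]
    by (simp add: sum_sigma2_def cmatch_var_def window_match_fun power2_eq_square)
qed

lemma valid_summing_match_fun:
  assumes "set u \<subseteq> {..<R}" "a < R"
  shows "valid_summing M eps (Suc (length u)) (match_fun u a)"
proof -
  have "cmatch_var u a > 0"
    using cmatch_var_eq[OF assms] R_gt_1 by simp
  moreover have "integrable M (\<lambda>\<omega>. (cmatch u a 0 \<omega>)\<^sup>2)"
    using integrable_cmatch_mult[of u a 0 u a 0] by (simp add: power2_eq_square)
  ultimately show ?thesis
    by (simp add: valid_summing_def window_match_fun integrable_cmatch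
        sum_sigma2_match_fun[OF assms(2)])
qed

lemma sum_stat_match_fun:
  assumes "a < R"
  shows "sum_stat M eps (Suc (length u)) (match_fun u a) n \<omega>
    = cmatch_sum u a (n - length u) \<omega>
      / (sqrt (cmatch_var u a) * sqrt (real (n - length u)))"
  by (simp add: sum_stat_def sum_E_match_fun[OF assms] sum_sigma2_match_fun[OF assms]
      window_match_fun cmatch_sum_def)

lemma sq_scaled_sum_stat_match_fun:
  assumes "set u \<subseteq> {..<R}" "a < R" "0 \<le> c"
  shows "(sqrt (c * cmatch_var u a) * sum_stat M eps (Suc (length u)) (match_fun u a) n \<omega>)\<^sup>2
    = c * (cmatch_sum u a (n - length u) \<omega>)\<^sup>2 / real (n - length u)"
proof -
  have "cmatch_var u a > 0"
    using cmatch_var_eq[OF assms(1,2)] R_gt_1 by simp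
  then show ?thesis
    using assms(3)
    by (simp add: sum_stat_match_fun[OF assms(2)] power_mult_distrib power_divide real_sqrt_mult)
qed

definition cyc_cmatch_sum :: "nat list \<Rightarrow> nat \<Rightarrow> nat \<Rightarrow> 'a \<Rightarrow> real" where
  "cyc_cmatch_sum u a n \<omega> = (\<Sum>i<n. centered_match R u a (\<lambda>j. code (eps ((i + j) mod n) \<omega>)))"

lemma cyc_cmatch_sum_eq:
  "cyc_cmatch_sum u a n \<omega> = real (cyc_count (\<lambda>i \<omega>. code (eps i \<omega>)) n (u @ [a]) \<omega>)
    - real (cyc_count (\<lambda>i \<omega>. code (eps i \<omega>)) n u \<omega>) / R"
  unfolding cyc_cmatch_sum_def by (rule sum_cyclic_centered_match)

lemma T_SO_eq_sum_sq_cyc_cmatch_sum: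
  assumes "1 \<le> m"
  shows "T_SO (\<lambda>i \<omega>. code (eps i \<omega>)) R m n \<omega>
    = real R ^ m / real n * (\<Sum>(u, a)\<in>words R (m - 1) \<times> {..<R}. (cyc_cmatch_sum u a n \<omega>)\<^sup>2)"
proof -
  have "T_SO (\<lambda>i \<omega>. code (eps i \<omega>)) R m n \<omega>
      = real R ^ m / real n * (\<Sum>u\<in>words R (m - 1). \<Sum>a<R. (cyc_cmatch_sum u a n \<omega>)\<^sup>2)"
    using T_SO_eq_sum_sq[OF assms, of "\<lambda>i \<omega>. code (eps i \<omega>)" R n \<omega>] code_less
    by (simp only: cyc_cmatch_sum_eq)
  then show ?thesis
    by (simp add: sum.cartesian_product)
qed

lemma T_SO_minus_T_quad_eq:
  assumes m: "1 \<le> m" and g: "bij_betw g {..<Q} (words R (m - 1) \<times> {..<R})"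
  shows "T_SO (\<lambda>i \<omega>. code (eps i \<omega>)) R m n \<omega>
      - T_quad M eps Q Q (\<lambda>i q. if i = q then sqrt (real R ^ m * cmatch_var (fst (g q)) (snd (g q))) else 0)
          (\<lambda>_. m) (\<lambda>q. match_fun (fst (g q)) (snd (g q))) n \<omega>
    = real R ^ m * (\<Sum>(u, a)\<in>words R (m - 1) \<times> {..<R}.
        (cyc_cmatch_sum u a n \<omega>)\<^sup>2 / n - (cmatch_sum u a (n - (m - 1)) \<omega>)\<^sup>2 / real (n - (m - 1)))"
proof -
  define W where "W = words R (m - 1) \<times> {..<R}"
  define N where "N = n - (m - 1)"
  define F where "F w = real R ^ m * (cmatch_sum (fst w) (snd w) N \<omega>)\<^sup>2 / N" for w
  have "(sqrt (real R ^ m * cmatch_var u a) * sum_stat M eps m (match_fun u a) n \<omega>)\<^sup>2 = F (u, a)"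
    if "(u, a) \<in> W" for u a
  proof -
    have "length u = m - 1" "set u \<subseteq> {..<R}" "a < R" using that by (auto simp: W_def words_def)
    moreover have "m = Suc (length u)" using m \<open>length u = m - 1\<close> by simp
    ultimately show ?thesis
      using sq_scaled_sum_stat_match_fun[of u a "real R ^ m" n \<omega>] by (simp add: F_def N_def)
  qed
  then have "T_quad M eps Q Q (\<lambda>i q. if i = q then sqrt (real R ^ m * cmatch_var (fst (g q)) (snd (g q))) else 0)
          (\<lambda>_. m) (\<lambda>q. match_fun (fst (g q)) (snd (g q))) n \<omega> = (\<Sum>q<Q. F (g q))"
    using bij_betwE[OF g] unfolding T_quad_diagonal W_def
    by (intro sum.cong refl) (metis lessThan_iff prod.collapse)
  also have "\<dots> = (\<Sum>w\<in>W. F w)"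
    using sum.reindex_bij_betw[OF g] by (simp add: W_def)
  finally show ?thesis
    unfolding T_SO_eq_sum_sq_cyc_cmatch_sum[OF m] N_def[symmetric] W_def[symmetric]
    by (simp add: F_def split_def right_diff_distrib sum_distrib_left sum_subtractf)
qed

definition sq_dev_bound :: "real \<Rightarrow> real \<Rightarrow> real \<Rightarrow> real" where
  "sq_dev_bound K n D = K\<^sup>2 / n + K / sqrt n + D\<^sup>2 * (K / (n * sqrt n) + K / (n * (n - K)))"

lemma abs_sq_cyc_cmatch_sum_diff_le:
  assumes "length u < n"
  shows "\<bar>(cyc_cmatch_sum u a n \<omega>)\<^sup>2 / n - (cmatch_sum u a (n - length u) \<omega>)\<^sup>2 / real (n - length u)\<bar>
    \<le> sq_dev_bound (length u) n (cmatch_sum u a (n - length u) \<omega>)"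
proof -
  have "\<bar>cyc_cmatch_sum u a n \<omega> - cmatch_sum u a (n - length u) \<omega>\<bar> \<le> length u"
    using abs_sum_cyclic_centered_match_diff_le[where \<kappa> = "\<lambda>i. code (eps i \<omega>)" and R = R] R_gt_1
    by (simp add: cyc_cmatch_sum_def cmatch_sum_def cmatch_def)
  then show ?thesis
    using abs_sq_div_diff_le[where K = "real (length u)" and n = "real n" and N = "real (n - length u)"] assms
    by (simp add: sq_dev_bound_def of_nat_diff)
qed

lemma integrable_sq_dev_bound: "integrable M (\<lambda>\<omega>. sq_dev_bound K n (cmatch_sum u a N \<omega>))"
  unfolding sq_dev_bound_def
  by (intro Bochner_Integration.integrable_add Bochner_Integration.integrable_mult_left
      integrable_const integrable_cmatch_sum_sq)

lemma expectation_sq_dev_bound_le: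
  assumes a: "a < R" and n: "length u < n"
  shows "expectation (\<lambda>\<omega>. sq_dev_bound (length u) n (cmatch_sum u a (n - length u) \<omega>))
    \<le> ((real (length u))\<^sup>2 + length u) / n + 2 * real (length u) / sqrt n"
proof -
  define K where "K = real (length u)"
  define b where "b = K / (n * sqrt n) + K / (n * (n - K))"
  have pos: "0 < real n - K" "0 < sqrt n" using n by (auto simp: K_def)
  have "0 \<le> b" using pos by (simp add: b_def K_def)
  have "expectation (\<lambda>\<omega>. sq_dev_bound K n (cmatch_sum u a (n - length u) \<omega>))
      = K\<^sup>2 / n + K / sqrt n + expectation (\<lambda>\<omega>. (cmatch_sum u a (n - length u) \<omega>)\<^sup>2) * b"
    by (simp add: sq_dev_bound_def b_def integrable_cmatch_sum_sq prob_space)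
  also have "\<dots> \<le> K\<^sup>2 / n + K / sqrt n + (n - K) * b"
    using expectation_cmatch_sum_sq_le[OF a, of u "n - length u"] \<open>0 \<le> b\<close> n
    by (intro add_left_mono mult_right_mono) (simp_all add: K_def of_nat_diff)
  also have "(n - K) * b = K * (n - K) / (n * sqrt n) + K / n"
    using pos by (simp add: b_def field_simps)
  also have "K * (n - K) / (n * sqrt n) \<le> K * n / (n * sqrt n)"
    using pos by (intro divide_right_mono mult_left_mono) (auto simp: K_def)
  also have "K * n / (n * sqrt n) = K / sqrt n"
    using pos by simp
  finally show ?thesis
    by (simp add: K_def add_divide_distrib)
qed

definition quad_error_bound :: "nat \<Rightarrow> nat \<Rightarrow> 'a \<Rightarrow> real" where
  "quad_error_bound m n \<omega> = real R ^ m * (\<Sum>(u, a)\<in>words R (m - 1) \<times> {..<R}.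
     sq_dev_bound (m - 1) n (cmatch_sum u a (n - (m - 1)) \<omega>))"

lemma abs_T_SO_minus_T_quad_le:
  assumes m: "1 \<le> m" "m \<le> n" and g: "bij_betw g {..<Q} (words R (m - 1) \<times> {..<R})"
  shows "\<bar>T_SO (\<lambda>i \<omega>. code (eps i \<omega>)) R m n \<omega>
      - T_quad M eps Q Q (\<lambda>i q. if i = q then sqrt (real R ^ m * cmatch_var (fst (g q)) (snd (g q))) else 0)
          (\<lambda>_. m) (\<lambda>q. match_fun (fst (g q)) (snd (g q))) n \<omega>\<bar>
    \<le> quad_error_bound m n \<omega>"
proof -
  define W where "W = words R (m - 1) \<times> {..<R}"
  have "\<bar>(cyc_cmatch_sum (fst w) (snd w) n \<omega>)\<^sup>2 / n
        - (cmatch_sum (fst w) (snd w) (n - (m - 1)) \<omega>)\<^sup>2 / real (n - (m - 1))\<bar>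
      \<le> sq_dev_bound (m - 1) n (cmatch_sum (fst w) (snd w) (n - (m - 1)) \<omega>)" if "w \<in> W" for w
  proof -
    have "length (fst w) = m - 1" using that by (auto simp: W_def words_def)
    then show ?thesis
      using abs_sq_cyc_cmatch_sum_diff_le[of "fst w" n "snd w" \<omega>] m by simp
  qed
  then have "real R ^ m * \<bar>\<Sum>w\<in>W. (cyc_cmatch_sum (fst w) (snd w) n \<omega>)\<^sup>2 / n
        - (cmatch_sum (fst w) (snd w) (n - (m - 1)) \<omega>)\<^sup>2 / real (n - (m - 1))\<bar>
      \<le> real R ^ m * (\<Sum>w\<in>W. sq_dev_bound (m - 1) n (cmatch_sum (fst w) (snd w) (n - (m - 1)) \<omega>))"
    by (intro mult_left_mono order.trans[OF sum_abs sum_mono]) auto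
  then show ?thesis
    unfolding T_SO_minus_T_quad_eq[OF m(1) g] quad_error_bound_def W_def[symmetric] split_def
    by (simp add: abs_mult)
qed

lemma integrable_quad_error_bound: "integrable M (quad_error_bound m n)"
  unfolding quad_error_bound_def split_def
  by (intro Bochner_Integration.integrable_mult_right Bochner_Integration.integrable_sum
      integrable_sq_dev_bound)

lemma expectation_quad_error_bound_le:
  assumes "1 \<le> m" "m \<le> n"
  shows "expectation (quad_error_bound m n)
    \<le> real R ^ m * card (words R (m - 1) \<times> {..<R})
      * (((real (m - 1))\<^sup>2 + (m - 1)) / n + 2 * real (m - 1) / sqrt n)"
proof -
  define W where "W = words R (m - 1) \<times> {..<R}"
  have "expectation (\<lambda>\<omega>. sq_dev_bound (m - 1) n (cmatch_sum (fst w) (snd w) (n - (m - 1)) \<omega>))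
      \<le> ((real (m - 1))\<^sup>2 + (m - 1)) / n + 2 * real (m - 1) / sqrt n" if "w \<in> W" for w
  proof -
    have "length (fst w) = m - 1" "snd w < R" using that by (auto simp: W_def words_def)
    then show ?thesis
      using expectation_sq_dev_bound_le[of "snd w" "fst w" n] assms by simp
  qed
  then have "real R ^ m * (\<Sum>w\<in>W.
        expectation (\<lambda>\<omega>. sq_dev_bound (m - 1) n (cmatch_sum (fst w) (snd w) (n - (m - 1)) \<omega>)))
      \<le> real R ^ m * (\<Sum>w\<in>W. ((real (m - 1))\<^sup>2 + (m - 1)) / n + 2 * real (m - 1) / sqrt n)"
    by (intro mult_left_mono sum_mono) auto
  then show ?thesis
    unfolding quad_error_bound_def W_def[symmetric] split_def
    by (simp add: Bochner_Integration.integral_sum integrable_sq_dev_bound mult.assoc)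
qed

theorem T_SO_minus_T_quad_conv_prob_zero:
  assumes m: "1 \<le> m"
  shows "\<exists>(\<tau>::nat) (Q::nat) d ms fs. \<tau> \<ge> 1 \<and> Q \<ge> 1 \<and> (\<forall>q<Q. valid_summing M eps (ms q) (fs q)) \<and>
    conv_prob_zero M (\<lambda>n \<omega>. T_SO (\<lambda>i \<omega>. code (eps i \<omega>)) R m n \<omega> - T_quad M eps \<tau> Q d ms fs n \<omega>)"
proof -
  define W where "W = words R (m - 1) \<times> {..<R}"
  define Q where "Q = card W"
  have "finite W" by (simp add: W_def finite_words)
  moreover have "(replicate (m - 1) 0, 0) \<in> W" using R_gt_1 by (auto simp: W_def words_def)
  ultimately have "Q \<ge> 1" unfolding Q_def by (metis One_nat_def Suc_leI card_gt_0_iff empty_iff)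
  obtain g where g: "bij_betw g {..<Q} W"
    using ex_bij_betw_nat_finite[OF \<open>finite W\<close>] by (auto simp: atLeast0LessThan Q_def)
  define d where "d = (\<lambda>i q. if i = q then sqrt (real R ^ m * cmatch_var (fst (g q)) (snd (g q))) else 0)"
  define fs where "fs = (\<lambda>q. match_fun (fst (g q)) (snd (g q)))"
  have "valid_summing M eps m (fs q)" if "q < Q" for q
  proof -
    have "g q \<in> W" using bij_betwE[OF g] that by simp
    then show ?thesis using m valid_summing_match_fun[of "fst (g q)" "snd (g q)"]
      by (auto simp: W_def words_def fs_def)
  qed
  moreover have "conv_prob_zero M (\<lambda>n \<omega>. T_SO (\<lambda>i \<omega>. code (eps i \<omega>)) R m n \<omega> - T_quad M eps Q Q d (\<lambda>_. m) fs n \<omega>)"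
  proof (rule conv_prob_zero_if_dominated)
    show "eventually (\<lambda>n. \<forall>\<omega>\<in>space M. \<bar>T_SO (\<lambda>i \<omega>. code (eps i \<omega>)) R m n \<omega>
        - T_quad M eps Q Q d (\<lambda>_. m) fs n \<omega>\<bar> \<le> quad_error_bound m n \<omega>) sequentially"
      unfolding d_def fs_def
      by (rule eventually_mono[OF eventually_ge_at_top[of m]])
        (use abs_T_SO_minus_T_quad_le[OF m _ g[unfolded W_def]] in blast)
    show "eventually (\<lambda>n. expectation (quad_error_bound m n) \<le> real R ^ m * Q
        * (((real (m - 1))\<^sup>2 + (m - 1)) / n + 2 * real (m - 1) / sqrt n)) sequentially"
      unfolding Q_def W_def
      by (rule eventually_mono[OF eventually_ge_at_top[of m]]) (rule expectation_quad_error_bound_le[OF m])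
    show "(\<lambda>n. real R ^ m * Q * (((real (m - 1))\<^sup>2 + (m - 1)) / n + 2 * real (m - 1) / sqrt n))
        \<longlonglongrightarrow> 0"
      by real_asymp
  qed (rule integrable_quad_error_bound)
  ultimately show ?thesis
    using \<open>Q \<ge> 1\<close> by (intro exI[of _ Q] exI[of _ d] exI[of _ "\<lambda>_. m"] exI[of _ fs]) auto
qed

end

theorem lemma2:
  fixes M :: "'a measure" and eps :: "nat \<Rightarrow> 'a \<Rightarrow> real"
    and m r :: nat and p :: "nat \<Rightarrow> nat"
  assumes "prob_space M"
    and "prob_space.indep_vars M (\<lambda>_. borel) eps UNIV"
    and "\<forall>i. distr M lborel (eps i) = uniform_measure lborel {0..1}"
    and "m \<ge> 2" and "r \<ge> 1"
    and "inj_on p {..<r}" and "\<forall>j<r. p j \<ge> 1"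
  shows "\<exists>(\<tau>::nat) (Q::nat) (d::nat \<Rightarrow> nat \<Rightarrow> real) (ms::nat \<Rightarrow> nat)
            (fs::nat \<Rightarrow> (nat \<Rightarrow> real) \<Rightarrow> real).
           \<tau> \<ge> 1 \<and> Q \<ge> 1 \<and> (\<forall>q<Q. valid_summing M eps (ms q) (fs q)) \<and>
           conv_prob_zero M (\<lambda>n \<omega>. T_SO (\<lambda>i \<omega>. bit_sel p r (eps i \<omega>)) (2 ^ r) m n \<omega>
                                    - T_quad M eps \<tau> Q d ms fs n \<omega>)"
proof -
  interpret prob_space M by fact
  have [measurable]: "eps i \<in> borel_measurable M" for i
    using assms(2) by (simp add: indep_vars_def)
  interpret indep_uniform_codes M eps "bit_sel p r" "2 ^ r"
  proof
    show "1 < (2::nat) ^ r" using \<open>r \<ge> 1\<close> by (intro one_less_power) auto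
    show "prob {\<omega> \<in> space M. bit_sel p r (eps i \<omega>) = a} = 1 / real (2 ^ r)" if "a < 2 ^ r" for i a
      using prob_bit_sel_uniform[of "eps i"] assms that by simp
  qed (use assms bit_sel_less in auto)
  show ?thesis
    using T_SO_minus_T_quad_conv_prob_zero[of m] \<open>m \<ge> 2\<close> by simp
qed

end
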